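(* Let $\mathcal{X}\subseteq\mathbb{R}^n$ be a compact set, $\mathcal{X}_0\subseteq\mathcal{X}$, and $f:\mathcal{X}\to\mathcal{X}$. Let $\mathcal{X}_{VF}\subseteq\mathcal{X}$ be partitioned as $\mathcal{X}_{VF}=\bigcup_{i=1}^{p}\mathcal{X}_{VF_i}$ for some $p\in\mathbb{N}$. Suppose there exist a function $\mathcal{T}:\mathcal{X}\times\mathcal{X}\to\mathbb{R}$ and functions $\mathcal{V}_i:\mathcal{X}\times\mathcal{X}\to\mathbb{R}_{\geq 0}$ (bounded from below), $1\le i\le p$, such that: (i) for all $x\in\mathcal{X}$: $\mathcal{T}(x,f(x))\geq 0$; (ii) for all $x,y\in\mathcal{X}$: if $\mathcal{T}(f(x),y)\geq 0$ then $\mathcal{T}(x,y)\geq 0$; (iii) for every $x_0\in\mathcal{X}_0$ and every $1\le i\le p$ there exists $\xi_i>0$ such that for all $z,z'\in\mathcal{X}_{VF_i}$: if $\mathcal{T}(x_0,z)\geq 0$ and $\mathcal{T}(z,z')\geq 0$, then $\mathcal{V}_i(x_0,z')\leq \mathcal{V}_i(x_0,z)-\xi_i$. Then for every $x_0\in\mathcal{X}_0$, the state sequence $\langle x_0,x_1,\ldots\rangle$ defined by $x_{k+1}=f(x_k)$ satisfies $x_k\in\mathcal{X}_{VF}$ for only finitely many $k\in\mathbb{N}$.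
   Context: This concerns a discrete-time dynamical system $(\mathcal{X},\mathcal{X}_0,f)$ with state set $\mathcal{X}$, initial set $\mathcal{X}_0$ and transition map $f$; its state sequences are $\langle x_0,x_1,\ldots\rangle$ with $x_0\in\mathcal{X}_0$ and $x_{k+1}=f(x_k)$. "Visited only finitely often" means only finitely many elements of the state sequence lie in the set. *)

theory Defs
  imports "HOL-Analysis.Analysis"
begin

definition state_seq :: "('a \<Rightarrow> 'a) \<Rightarrow> 'a \<Rightarrow> nat \<Rightarrow> 'a" where
  "state_seq f x0 k = (f ^^ k) x0"

end

theory Submission
  imports Defs
begin

text \<open>Along the trajectory from x0 every later state is T-reachable from every earlier one
  (by (i) and (ii)). So on a fixed cell the successive visits after time 0 make V_i(x0, -)
  drop by at least xi_i each time; being nonnegative, it can do so only finitely often.\<close>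

lemma state_seq_0 [simp]: "state_seq f x0 0 = x0"
  by (simp add: state_seq_def)

lemma state_seq_Suc: "state_seq f x0 (Suc k) = f (state_seq f x0 k)"
  by (simp add: state_seq_def)

lemma state_seq_in_invariant:
  assumes "x0 \<in> X" and "\<forall>x\<in>X. f x \<in> X"
  shows "state_seq f x0 k \<in> X"
  by (induction k) (use assms in \<open>auto simp: state_seq_Suc\<close>)

lemma state_seq_related_later:
  assumes "x0 \<in> X" and "\<forall>x\<in>X. f x \<in> X"
    and step: "\<forall>x\<in>X. R x (f x)"
    and backward: "\<forall>x\<in>X. \<forall>y\<in>X. R (f x) y \<longrightarrow> R x y"
    and "j < k"
  shows "R (state_seq f x0 j) (state_seq f x0 k)"
proof -
  let ?s = "state_seq f x0"
  have in_X: "?s n \<in> X" for n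
    using assms(1,2) by (rule state_seq_in_invariant)
  have "R (?s j) (?s (j + Suc d))" for d
  proof (induction d arbitrary: j)
    case 0
    show ?case using step in_X by (simp add: state_seq_Suc)
  next
    case (Suc d)
    have "R (f (?s j)) (?s (j + Suc (Suc d)))"
      using Suc.IH[of "Suc j"] by (simp add: state_seq_Suc)
    then show ?case using backward in_X by blast
  qed
  from this[of "k - Suc j"] show ?thesis
    using \<open>j < k\<close> by simp
qed

lemma finite_if_uniform_descent:
  fixes g :: "nat \<Rightarrow> real"
  assumes "\<xi> > 0"
    and nonneg: "\<forall>k\<in>K. 0 \<le> g k"
    and descent: "\<forall>j\<in>K. \<forall>k\<in>K. j < k \<longrightarrow> g k \<le> g j - \<xi>"
  shows "finite K"
proof (rule ccontr)
  assume "infinite K"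
  define e where "e = enumerate K"
  have e_in: "e n \<in> K" for n
    using enumerate_in_set[OF \<open>infinite K\<close>] by (simp add: e_def)
  have e_less: "e n < e (Suc n)" for n
    using enumerate_mono[OF lessI \<open>infinite K\<close>] by (simp add: e_def)
  have g_bound: "g (e n) \<le> g (e 0) - real n * \<xi>" for n
  proof (induction n)
    case (Suc n)
    have "g (e (Suc n)) \<le> g (e n) - \<xi>"
      using descent e_in e_less by blast
    with Suc.IH show ?case by (simp add: algebra_simps)
  qed simp
  obtain n where "g (e 0) < real n * \<xi>"
    using reals_Archimedean3[OF \<open>\<xi> > 0\<close>] by blast
  with g_bound[of n] nonneg e_in show False
    by (meson diff_less_0_iff_less le_less_trans not_le)
qed

text \<open>The decrease condition only applies to states T-reachable from x0, and T x0 x0 is not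
  assumed nonnegative, so time 0 is excluded.\<close>

lemma finite_visits_after_start:
  fixes s :: "nat \<Rightarrow> 'a" and W :: "'a \<Rightarrow> real"
  assumes "\<xi> > 0"
    and related: "\<forall>j k. j < k \<longrightarrow> R (s j) (s k)"
    and descent: "\<forall>z\<in>C. \<forall>z'\<in>C. R (s 0) z \<and> R z z' \<longrightarrow> W z' \<le> W z - \<xi>"
    and nonneg: "\<forall>k. 0 \<le> W (s k)"
  shows "finite {k. 0 < k \<and> s k \<in> C}"
  using \<open>\<xi> > 0\<close>
proof (rule finite_if_uniform_descent[where g = "W \<circ> s"])
  show "\<forall>j\<in>{k. 0 < k \<and> s k \<in> C}. \<forall>k\<in>{k. 0 < k \<and> s k \<in> C}.
          j < k \<longrightarrow> (W \<circ> s) k \<le> (W \<circ> s) j - \<xi>"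
    using related descent by auto
qed (use nonneg in simp)

theorem lemma1:
  fixes X X0 :: "'a::euclidean_space set"
    and f :: "'a \<Rightarrow> 'a"
    and p :: nat
    and XVF_i :: "nat \<Rightarrow> 'a set"
    and XVF :: "'a set"
    and T :: "'a \<Rightarrow> 'a \<Rightarrow> real"
    and V :: "nat \<Rightarrow> 'a \<Rightarrow> 'a \<Rightarrow> real"
  assumes "compact X"
    and "X0 \<subseteq> X"
    and "\<forall>x\<in>X. f x \<in> X"
    and "XVF \<subseteq> X"
    and "XVF = (\<Union>i\<in>{1..p}. XVF_i i)"
    and "\<forall>i\<in>{1..p}. \<forall>j\<in>{1..p}. i \<noteq> j \<longrightarrow> XVF_i i \<inter> XVF_i j = {}"
    and "\<forall>i\<in>{1..p}. \<forall>x\<in>X. \<forall>y\<in>X. V i x y \<ge> 0"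
    and "\<forall>x\<in>X. T x (f x) \<ge> 0"
    and "\<forall>x\<in>X. \<forall>y\<in>X. T (f x) y \<ge> 0 \<longrightarrow> T x y \<ge> 0"
    and "\<forall>x0\<in>X0. \<forall>i\<in>{1..p}. \<exists>\<xi>>0. \<forall>z\<in>XVF_i i. \<forall>z'\<in>XVF_i i.
           T x0 z \<ge> 0 \<and> T z z' \<ge> 0 \<longrightarrow> V i x0 z' \<le> V i x0 z - \<xi>"
  shows "\<forall>x0\<in>X0. finite {k::nat. state_seq f x0 k \<in> XVF}"
proof
  fix x0 assume "x0 \<in> X0"
  let ?s = "state_seq f x0"
  have "x0 \<in> X" using \<open>x0 \<in> X0\<close> assms(2) by blast
  have related: "\<forall>j k. j < k \<longrightarrow> T (?s j) (?s k) \<ge> 0"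
    using state_seq_related_later[OF \<open>x0 \<in> X\<close> assms(3), of "\<lambda>x y. T x y \<ge> 0"] assms(8,9)
    by blast
  have in_X: "?s k \<in> X" for k
    using \<open>x0 \<in> X\<close> assms(3) by (rule state_seq_in_invariant)
  have "finite {k. 0 < k \<and> ?s k \<in> XVF_i i}" if "i \<in> {1..p}" for i
  proof -
    obtain \<xi> where "\<xi> > 0" and "\<forall>z\<in>XVF_i i. \<forall>z'\<in>XVF_i i.
        T x0 z \<ge> 0 \<and> T z z' \<ge> 0 \<longrightarrow> V i x0 z' \<le> V i x0 z - \<xi>"
      using assms(10) \<open>x0 \<in> X0\<close> \<open>i \<in> {1..p}\<close> by blast
    then show ?thesis
      using finite_visits_after_start[where R = "\<lambda>x y. T x y \<ge> 0" and C = "XVF_i i" and W = "V i x0",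
          OF \<open>\<xi> > 0\<close> related]
        assms(7) \<open>i \<in> {1..p}\<close> \<open>x0 \<in> X\<close> in_X by simp
  qed
  then have "finite ({0} \<union> (\<Union>i\<in>{1..p}. {k. 0 < k \<and> ?s k \<in> XVF_i i}))"
    by auto
  then show "finite {k. ?s k \<in> XVF}"
    by (rule finite_subset[rotated]) (use assms(5) in auto)
qed

end
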